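(* Let $c\geq 1$ be a real number and let $G$ be a finite graph whose growth satisfies $f_G(r)\leq cr$ for every positive integer $r$. Then $\operatorname{sep}_{1-\frac{1}{4c}}(G) < 2c$.
   Context: All graphs are finite. The growth of $G$ is the function $f_G\colon\mathbb{N}\to\mathbb{N}$ where $f_G(r)$ is the maximum of $|V(H)|$ over all subgraphs $H$ of $G$ of radius at most $r$. A separation of a graph $H$ is a pair $(A,B)$ of subsets of $V(H)$ with $A\cup B = V(H)$ such that no edge of $H$ has one end in $A\setminus B$ and the other in $B\setminus A$; its order is $|A\cap B|$. For $\alpha\in[\frac23,1)$, a separation $(A,B)$ of an $n$-vertex graph is $\alpha$-balanced if $|A\setminus B|\leq \alpha n$ and $|B\setminus A|\leq\alpha n$. The $\alpha$-separation number $\operatorname{sep}_\alpha(G)$ is the smallest integer $s$ such that every subgraph of $G$ has an $\alpha$-balanced separation of order at most $s$. *)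

theory Defs
  imports Complex_Main
begin

definition graph :: "'a set \<Rightarrow> ('a \<Rightarrow> 'a \<Rightarrow> bool) \<Rightarrow> bool" where
  "graph V E \<longleftrightarrow> finite V \<and> (\<forall>x y. E x y \<longrightarrow> x \<in> V \<and> y \<in> V \<and> x \<noteq> y \<and> E y x)"

definition subgraph :: "'a set \<Rightarrow> ('a \<Rightarrow> 'a \<Rightarrow> bool) \<Rightarrow> 'a set \<Rightarrow> ('a \<Rightarrow> 'a \<Rightarrow> bool) \<Rightarrow> bool" where
  "subgraph V' E' V E \<longleftrightarrow> graph V' E' \<and> V' \<subseteq> V \<and> (\<forall>x y. E' x y \<longrightarrow> E x y)"

definition dist_le :: "('a \<Rightarrow> 'a \<Rightarrow> bool) \<Rightarrow> 'a \<Rightarrow> 'a \<Rightarrow> nat \<Rightarrow> bool" where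
  "dist_le E v u r \<longleftrightarrow> (\<exists>k\<le>r. (v, u) \<in> {(x, y). E x y} ^^ k)"

definition radius_le :: "'a set \<Rightarrow> ('a \<Rightarrow> 'a \<Rightarrow> bool) \<Rightarrow> nat \<Rightarrow> bool" where
  "radius_le V E r \<longleftrightarrow> (\<exists>v\<in>V. \<forall>u\<in>V. dist_le E v u r)"

definition growth :: "'a set \<Rightarrow> ('a \<Rightarrow> 'a \<Rightarrow> bool) \<Rightarrow> nat \<Rightarrow> nat" where
  "growth V E r = Max (insert 0 {card V' | V' E'. subgraph V' E' V E \<and> radius_le V' E' r})"

definition separation :: "'a set \<Rightarrow> ('a \<Rightarrow> 'a \<Rightarrow> bool) \<Rightarrow> 'a set \<Rightarrow> 'a set \<Rightarrow> bool" where
  "separation V E A B \<longleftrightarrow> A \<union> B = V \<and>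
     (\<forall>x y. E x y \<longrightarrow> \<not> (x \<in> A - B \<and> y \<in> B - A))"

definition balanced :: "real \<Rightarrow> 'a set \<Rightarrow> 'a set \<Rightarrow> 'a set \<Rightarrow> bool" where
  "balanced \<alpha> V A B \<longleftrightarrow> real (card (A - B)) \<le> \<alpha> * real (card V) \<and>
                          real (card (B - A)) \<le> \<alpha> * real (card V)"

definition sep_num :: "real \<Rightarrow> 'a set \<Rightarrow> ('a \<Rightarrow> 'a \<Rightarrow> bool) \<Rightarrow> nat" where
  "sep_num \<alpha> V E = (LEAST s. \<forall>V' E'. subgraph V' E' V E \<longrightarrow>
      (\<exists>A B. separation V' E' A B \<and> balanced \<alpha> V' A B \<and> card (A \<inter> B) \<le> s))"

end

theory Submission
  imports Defs
begin

text \<open>Let \<open>H\<close> be a subgraph of \<open>G\<close> with \<open>n\<close> vertices and put \<open>t = n/(4c)\<close>. Take a largest union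
  \<open>W\<close> of components of \<open>H\<close> with fewer than \<open>t\<close> vertices and let \<open>B(j)\<close> be the set of vertices
  at distance less than \<open>j\<close> from a vertex \<open>v \<notin> W\<close>; linear growth gives \<open>|B(j)| \<le> cj\<close>.
  A ball that stops growing is a union of components, so by maximality of \<open>W\<close> the balls grow
  strictly until \<open>|W| + |B(j)|\<close> reaches \<open>t\<close>, at some \<open>p\<close> with \<open>p - 1 < t - |W|\<close>. Since
  \<open>|B(2p - 1)| \<le> c(2p - 1) < 2cp\<close>, one of the \<open>p\<close> layers \<open>B(i + 1) - B(i)\<close> with
  \<open>p - 1 \<le> i < 2p - 1\<close> has fewer than \<open>2c\<close> vertices. This layer separates \<open>W \<union> B(i)\<close>, of size
  at most \<open>|W| + 2c(p - 1) < n/2\<close>, from the rest of \<open>H\<close>, which misses \<open>W \<union> B(p)\<close> and hence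
  has at most \<open>n - t\<close> vertices.\<close>

text \<open>The radius bound is strict: the ball of radius \<open>r\<close> is \<open>graph_ball E v (Suc r)\<close>, and
  \<open>graph_ball E v 0 = {}\<close>.\<close>
definition graph_ball :: "('a \<Rightarrow> 'a \<Rightarrow> bool) \<Rightarrow> 'a \<Rightarrow> nat \<Rightarrow> 'a set" where
  "graph_ball E v j = {u. \<exists>k<j. (v, u) \<in> {(x, y). E x y} ^^ k}"

definition component_closed :: "('a \<Rightarrow> 'a \<Rightarrow> bool) \<Rightarrow> 'a set \<Rightarrow> bool" where
  "component_closed E W \<longleftrightarrow> (\<forall>x y. E x y \<longrightarrow> (x \<in> W \<longleftrightarrow> y \<in> W))"

definition restrict_edges :: "('a \<Rightarrow> 'a \<Rightarrow> bool) \<Rightarrow> 'a set \<Rightarrow> 'a \<Rightarrow> 'a \<Rightarrow> bool" where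
  "restrict_edges E S x y \<longleftrightarrow> E x y \<and> x \<in> S \<and> y \<in> S"

lemma component_closed_graph: "graph V E \<Longrightarrow> component_closed E V"
  unfolding graph_def component_closed_def by blast

lemma component_closed_Un:
  "component_closed E A \<Longrightarrow> component_closed E B \<Longrightarrow> component_closed E (A \<union> B)"
  unfolding component_closed_def by blast

lemma component_closed_relpow:
  assumes "component_closed E W" and "(v, u) \<in> {(x, y). E x y} ^^ k"
  shows "v \<in> W \<longleftrightarrow> u \<in> W"
  using assms(2)
proof (induction k arbitrary: u)
  case (Suc k)
  then obtain w where "(v, w) \<in> {(x, y). E x y} ^^ k" "E w u" by auto
  with Suc.IH assms(1) show ?case unfolding component_closed_def by blast
qed simp

lemma graph_ball_0 [simp]: "graph_ball E v 0 = {}"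
  by (simp add: graph_ball_def)

lemma graph_ball_1 [simp]: "graph_ball E v (Suc 0) = {v}"
  by (auto simp: graph_ball_def)

lemma center_in_graph_ball: "j \<ge> 1 \<Longrightarrow> v \<in> graph_ball E v j"
  by (auto simp: graph_ball_def intro: exI[of _ 0])

lemma mono_graph_ball: "mono (graph_ball E v)"
  unfolding graph_ball_def by (auto intro!: monoI intro: less_le_trans)

lemma graph_ball_Suc_edge: "u \<in> graph_ball E v j \<Longrightarrow> E u w \<Longrightarrow> w \<in> graph_ball E v (Suc j)"
  unfolding graph_ball_def by fastforce

lemma graph_ball_subset_closed:
  "component_closed E W \<Longrightarrow> v \<in> W \<Longrightarrow> graph_ball E v j \<subseteq> W"
  unfolding graph_ball_def using component_closed_relpow by fast

lemma graph_ball_disjoint_closed: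
  "component_closed E W \<Longrightarrow> v \<notin> W \<Longrightarrow> graph_ball E v j \<inter> W = {}"
  unfolding graph_ball_def using component_closed_relpow by fast

lemma component_closed_graph_ball:
  assumes "graph V E" and "graph_ball E v (Suc j) = graph_ball E v j"
  shows "component_closed E (graph_ball E v j)"
  unfolding component_closed_def
proof (intro allI impI iffI)
  fix x y assume "E x y"
  then have "E y x" using assms(1) unfolding graph_def by blast
  show "y \<in> graph_ball E v j" if "x \<in> graph_ball E v j"
    using graph_ball_Suc_edge[OF that \<open>E x y\<close>] assms(2) by simp
  show "x \<in> graph_ball E v j" if "y \<in> graph_ball E v j"
    using graph_ball_Suc_edge[OF that \<open>E y x\<close>] assms(2) by simp
qed

lemma graph_ball_subset: "graph V E \<Longrightarrow> v \<in> V \<Longrightarrow> graph_ball E v j \<subseteq> V"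
  by (rule graph_ball_subset_closed[OF component_closed_graph])

lemma finite_graph_ball:
  assumes "graph V E" and "v \<in> V"
  shows "finite (graph_ball E v j)"
proof (rule finite_subset)
  show "graph_ball E v j \<subseteq> V" using assms by (rule graph_ball_subset)
  show "finite V" using assms(1) unfolding graph_def by simp
qed

lemma card_Un_graph_ball:
  assumes "graph V E" and "component_closed E W" and "W \<subseteq> V" and "v \<in> V" and "v \<notin> W"
  shows "card (W \<union> graph_ball E v j) = card W + card (graph_ball E v j)"
proof (rule card_Un_disjoint)
  have "finite V" using assms(1) unfolding graph_def by simp
  then show "finite W" using assms(3) by (rule finite_subset[rotated])
  show "finite (graph_ball E v j)" using assms(1,4) by (rule finite_graph_ball)
  show "W \<inter> graph_ball E v j = {}" using graph_ball_disjoint_closed[OF assms(2,5)] by blast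
qed

lemma le_card_graph_ball:
  assumes "graph V E" and "v \<in> V"
    and "\<And>i. 1 \<le> i \<Longrightarrow> i < j \<Longrightarrow> \<not> component_closed E (graph_ball E v i)"
  shows "j \<le> card (graph_ball E v j)"
  using assms(3)
proof (induction j)
  case (Suc j)
  have IH: "j \<le> card (graph_ball E v j)" using Suc.IH Suc.prems by simp
  show ?case
  proof (cases "j = 0")
    case False
    then have "\<not> component_closed E (graph_ball E v j)" using Suc.prems by simp
    then have "graph_ball E v (Suc j) \<noteq> graph_ball E v j"
      using component_closed_graph_ball[OF assms(1)] by blast
    moreover have "graph_ball E v j \<subseteq> graph_ball E v (Suc j)"
      using mono_graph_ball by (rule monoD) simp
    ultimately have "card (graph_ball E v j) < card (graph_ball E v (Suc j))"
      using finite_graph_ball[OF assms(1,2)] by (intro psubset_card_mono) auto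
    with IH show ?thesis by simp
  qed simp
qed simp

lemma relpow_restrict_graph_ball:
  assumes "(v, u) \<in> {(x, y). E x y} ^^ k" and "k \<le> r"
  shows "(v, u) \<in> {(x, y). restrict_edges E (graph_ball E v (Suc r)) x y} ^^ k"
  using assms
proof (induction k arbitrary: u)
  case (Suc k)
  then obtain w where w: "(v, w) \<in> {(x, y). E x y} ^^ k" "E w u" by auto
  have "w \<in> graph_ball E v (Suc r)"
    unfolding graph_ball_def using w(1) Suc.prems(2) by (intro CollectI exI[of _ k]) simp
  moreover have "u \<in> graph_ball E v (Suc r)"
    unfolding graph_ball_def using Suc.prems by (intro CollectI exI[of _ "Suc k"]) simp
  moreover have "(v, w) \<in> {(x, y). restrict_edges E (graph_ball E v (Suc r)) x y} ^^ k"
    using Suc.IH[OF w(1)] Suc.prems(2) by simp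
  ultimately show ?case
    using w(2) by (intro relpow_Suc_I[of v w]) (auto simp: restrict_edges_def)
qed simp

lemma radius_le_graph_ball:
  "radius_le (graph_ball E v (Suc r)) (restrict_edges E (graph_ball E v (Suc r))) r"
  unfolding radius_le_def dist_le_def
proof (intro bexI[of _ v] ballI)
  fix u assume "u \<in> graph_ball E v (Suc r)"
  then obtain k where "k \<le> r" "(v, u) \<in> {(x, y). E x y} ^^ k"
    unfolding graph_ball_def by (auto simp: less_Suc_eq_le)
  then show "\<exists>k\<le>r. (v, u) \<in> {(x, y). restrict_edges E (graph_ball E v (Suc r)) x y} ^^ k"
    using relpow_restrict_graph_ball by meson
qed (simp add: center_in_graph_ball)

lemma subgraph_restrict_edges:
  assumes "subgraph V' E' V E" and "S \<subseteq> V'"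
  shows "subgraph S (restrict_edges E' S) V E"
proof -
  have "graph V' E'" "V' \<subseteq> V" "\<forall>x y. E' x y \<longrightarrow> E x y"
    using assms(1) unfolding subgraph_def by auto
  moreover from this have "finite S"
    using assms(2) finite_subset unfolding graph_def by auto
  ultimately show ?thesis
    using assms(2) unfolding subgraph_def graph_def restrict_edges_def by auto
qed

lemma card_le_growth:
  assumes "graph V E" and "subgraph V' E' V E" and "radius_le V' E' r"
  shows "card V' \<le> growth V E r"
proof -
  let ?sizes = "{card V' | V' E'. subgraph V' E' V E \<and> radius_le V' E' r}"
  have "?sizes \<subseteq> {..card V}"
  proof
    fix k assume "k \<in> ?sizes"
    then obtain V1 E1 where "k = card V1" "subgraph V1 E1 V E" by blast
    moreover have "finite V" using assms(1) unfolding graph_def by simp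
    ultimately show "k \<in> {..card V}"
      unfolding subgraph_def by (simp add: card_mono)
  qed
  then have "finite (insert 0 ?sizes)" using finite_subset by blast
  moreover have "card V' \<in> insert 0 ?sizes" using assms(2,3) by blast
  ultimately show ?thesis unfolding growth_def by (rule Max_ge)
qed

lemma card_graph_ball_le_growth:
  assumes "graph V E" and "subgraph V' E' V E" and "v \<in> V'"
  shows "card (graph_ball E' v (Suc r)) \<le> growth V E r"
proof (rule card_le_growth[OF assms(1) subgraph_restrict_edges radius_le_graph_ball])
  show "subgraph V' E' V E" by (fact assms(2))
  have "graph V' E'" using assms(2) unfolding subgraph_def by simp
  then show "graph_ball E' v (Suc r) \<subseteq> V'" using assms(3) by (rule graph_ball_subset)
qed

lemma card_graph_ball_le_linear:
  fixes c :: real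
  assumes "graph V E" and "subgraph V' E' V E" and "v \<in> V'" and "c \<ge> 1"
    and "\<forall>r::nat. r \<ge> 1 \<longrightarrow> real (growth V E r) \<le> c * real r"
  shows "real (card (graph_ball E' v j)) \<le> c * real j"
proof (cases "j \<le> 1")
  case True
  then have "j = 0 \<or> j = Suc 0" by auto
  with assms(4) show ?thesis by auto
next
  case False
  define r where "r = j - 1"
  have r: "j = Suc r" "r \<ge> 1" using False unfolding r_def by auto
  have "real (card (graph_ball E' v j)) \<le> real (growth V E r)"
    using card_graph_ball_le_growth[OF assms(1-3)] r(1) by simp
  also have "\<dots> \<le> c * real r" using assms(5) r(2) by blast
  also have "\<dots> \<le> c * real j" using assms(4) r(1) by simp
  finally show ?thesis .
qed

lemma thin_layer:
  fixes b :: "nat \<Rightarrow> 'a set" and d :: real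
  assumes "mono b" and "\<And>j. finite (b j)" and "real (card (b (m + k))) < d * real k"
  shows "\<exists>i. m \<le> i \<and> i < m + k \<and> real (card (b (Suc i) - b i)) < d"
proof (rule ccontr)
  assume "\<not> ?thesis"
  then have thick: "d \<le> real (card (b (Suc i) - b i))" if "m \<le> i" "i < m + k" for i
    using that by (meson not_less)
  have "d * real l \<le> real (card (b (m + l)))" if "l \<le> k" for l
    using that
  proof (induction l)
    case (Suc l)
    have "b (m + l) \<subseteq> b (Suc (m + l))" using assms(1) by (rule monoD) simp
    then have "card (b (Suc (m + l))) = card (b (m + l)) + card (b (Suc (m + l)) - b (m + l))"
      using assms(2) by (metis card_Diff_subset card_mono le_add_diff_inverse)
    moreover have "d \<le> real (card (b (Suc (m + l)) - b (m + l)))"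
      using Suc.prems by (intro thick) auto
    ultimately show ?case using Suc by (simp add: algebra_simps)
  qed simp
  with assms(3) show False by (meson not_less order_refl)
qed

lemma graph_ball_layer_cut:
  fixes i :: nat
  assumes "graph V E" and "component_closed E W" and "W \<subseteq> V" and "v \<in> V" and "v \<notin> W"
  defines "A \<equiv> W \<union> graph_ball E v (Suc i)" and "B \<equiv> V - (W \<union> graph_ball E v i)"
  shows "separation V E A B"
    and "A \<inter> B = graph_ball E v (Suc i) - graph_ball E v i"
    and "card (A - B) = card W + card (graph_ball E v i)"
    and "card (B - A) = card V - (card W + card (graph_ball E v (Suc i)))"
proof -
  have inner: "graph_ball E v i \<subseteq> graph_ball E v (Suc i)" using mono_graph_ball by (rule monoD) simp
  have sub: "graph_ball E v j \<subseteq> V" for j using assms(1,4) by (rule graph_ball_subset)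
  have disj: "graph_ball E v j \<inter> W = {}" for j using assms(2,5) by (rule graph_ball_disjoint_closed)
  show "separation V E A B"
    unfolding separation_def
  proof (intro conjI allI impI notI)
    show "A \<union> B = V" unfolding A_def B_def using assms(3) sub inner by blast
  next
    fix x y
    assume "E x y" and xy: "x \<in> A - B \<and> y \<in> B - A"
    then have "y \<in> W" if "x \<in> W" using assms(2) that unfolding component_closed_def by blast
    moreover have "y \<in> graph_ball E v (Suc i)" if "x \<in> graph_ball E v i"
      using that \<open>E x y\<close> by (rule graph_ball_Suc_edge)
    ultimately show False using xy assms(3) sub unfolding A_def B_def by blast
  qed
  show "A \<inter> B = graph_ball E v (Suc i) - graph_ball E v i"
    unfolding A_def B_def using sub disj by blast
  have "A - B = W \<union> graph_ball E v i" unfolding A_def B_def using assms(3) sub inner by blast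
  then show "card (A - B) = card W + card (graph_ball E v i)"
    using card_Un_graph_ball[OF assms(1-5)] by simp
  have "finite V" using assms(1) unfolding graph_def by simp
  have "B - A = V - (W \<union> graph_ball E v (Suc i))" unfolding A_def B_def using inner by blast
  also have "card \<dots> = card V - card (W \<union> graph_ball E v (Suc i))"
    using \<open>finite V\<close> assms(3) sub by (intro card_Diff_subset) (auto intro: finite_subset)
  finally show "card (B - A) = card V - (card W + card (graph_ball E v (Suc i)))"
    using card_Un_graph_ball[OF assms(1-5)] by simp
qed

lemma inner_side_less_half:
  fixes c :: real
  assumes c: "c \<ge> 1"
    and ball_le: "\<And>j. real (card (graph_ball E v j)) \<le> c * real j"
    and below: "real (p - 1) + real (card W) < real n / (4 * c)"
    and "i \<le> 2 * (p - 1)"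
  shows "real (card W + card (graph_ball E v i)) < real n / 2"
proof -
  have "real (card (graph_ball E v i)) \<le> c * real i" by (rule ball_le)
  also have "\<dots> \<le> 2 * c * real (p - 1)" using assms(4) c by (simp add: mult_left_mono)
  also have "\<dots> < 2 * c * (real n / (4 * c) - real (card W))"
    using below c by (intro mult_strict_left_mono) auto
  also have "\<dots> = real n / 2 - 2 * c * real (card W)" using c by (simp add: field_simps)
  finally have "real (card (graph_ball E v i)) < real n / 2 - 2 * c * real (card W)" .
  moreover have "real (card W) \<le> 2 * c * real (card W)"
    using c mult_right_mono[of 1 "2 * c" "real (card W)"] by simp
  ultimately show ?thesis by simp
qed

lemma balanced_separation_at_thin_layer:
  fixes c :: real
  assumes "graph V E" and W: "component_closed E W" "W \<subseteq> V" and v: "v \<in> V" "v \<notin> W"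
    and c: "c \<ge> 1"
    and ball_le: "\<And>j. real (card (graph_ball E v j)) \<le> c * real j"
    and below: "real (p - 1) + real (card W) < real (card V) / (4 * c)"
    and above: "real (card V) / (4 * c) \<le> real (card W + card (graph_ball E v p))"
  shows "\<exists>A B. separation V E A B \<and> balanced (1 - 1 / (4 * c)) V A B \<and> real (card (A \<inter> B)) < 2 * c"
proof -
  define n b where "n = card V" and "b = graph_ball E v"
  have "p \<ge> 1"
  proof (rule ccontr)
    assume "\<not> p \<ge> 1"
    then have "p = 0" by simp
    then show False using below above by simp
  qed
  have "real (card (b (p - 1 + p))) \<le> c * real (p - 1 + p)" unfolding b_def by (rule ball_le)
  also have "\<dots> < 2 * c * real p" using \<open>p \<ge> 1\<close> c by (simp add: of_nat_diff algebra_simps)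
  finally obtain i where i: "p - 1 \<le> i" "i < p - 1 + p" "real (card (b (Suc i) - b i)) < 2 * c"
    using thin_layer[OF mono_graph_ball finite_graph_ball[OF assms(1) v(1)]] unfolding b_def by blast
  define A B where "A = W \<union> b (Suc i)" and "B = V - (W \<union> b i)"
  note cut = graph_ball_layer_cut[OF assms(1) W v, of i, folded b_def, folded A_def B_def]
  have inner_le: "real (card W + card (b i)) < real n / 2"
    unfolding n_def b_def by (rule inner_side_less_half[OF c ball_le below]) (use i(2) in simp)
  have half: "real n / 2 \<le> (1 - 1 / (4 * c)) * real n"
  proof -
    have "1 / (4 * c) \<le> 1 / 2" using c by (simp add: field_simps)
    then show ?thesis using mult_right_mono[of "1 / 2" "1 - 1 / (4 * c)" "real n"] by simp
  qed
  have outer_le: "real (n - (card W + card (b (Suc i)))) \<le> (1 - 1 / (4 * c)) * real n"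
  proof -
    have "b p \<subseteq> b (Suc i)" unfolding b_def using mono_graph_ball by (rule monoD) (use i(1) in simp)
    then have "card (b p) \<le> card (b (Suc i))"
      unfolding b_def using finite_graph_ball[OF assms(1) v(1)] by (rule card_mono[rotated])
    moreover have "card W + card (b (Suc i)) \<le> n"
    proof -
      have "finite V" using assms(1) unfolding graph_def by simp
      then have "card (W \<union> b (Suc i)) \<le> n"
        unfolding n_def b_def using W(2) graph_ball_subset[OF assms(1) v(1)] by (intro card_mono) auto
      then show ?thesis using card_Un_graph_ball[OF assms(1) W v] by (simp add: b_def)
    qed
    ultimately show ?thesis using above unfolding n_def b_def by (simp add: of_nat_diff algebra_simps)
  qed
  have "balanced (1 - 1 / (4 * c)) V A B"
    using cut(3,4) inner_le half outer_le unfolding balanced_def n_def by linarith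
  moreover have "real (card (A \<inter> B)) < 2 * c" using cut(2) i(3) by simp
  ultimately show ?thesis using cut(1) by blast
qed

lemma le_card_graph_ball_below_threshold:
  fixes t :: real
  assumes "graph V E" and W: "component_closed E W" "W \<subseteq> V"
    and maximal: "\<And>W'. W' \<subseteq> V \<Longrightarrow> component_closed E W' \<Longrightarrow> real (card W') < t \<Longrightarrow> card W' \<le> card W"
    and v: "v \<in> V" "v \<notin> W"
    and "real (card W + card (graph_ball E v j)) < t"
  shows "j \<le> card (graph_ball E v j)"
proof (rule le_card_graph_ball[OF assms(1) v(1)])
  fix i assume i: "1 \<le> i" "i < j"
  have fin_b: "finite (graph_ball E v k)" for k using assms(1) v(1) by (rule finite_graph_ball)
  have card_Wb: "card (W \<union> graph_ball E v k) = card W + card (graph_ball E v k)" for k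
    using assms(1) W v by (rule card_Un_graph_ball)
  have "card (graph_ball E v i) \<le> card (graph_ball E v j)"
    using card_mono[OF fin_b monoD[OF mono_graph_ball]] i(2) by simp
  then have below: "real (card (W \<union> graph_ball E v i)) < t" using assms(7) card_Wb by simp
  show "\<not> component_closed E (graph_ball E v i)"
  proof
    assume "component_closed E (graph_ball E v i)"
    then have "card (W \<union> graph_ball E v i) \<le> card W"
      using W graph_ball_subset[OF assms(1) v(1)] below by (intro maximal component_closed_Un) auto
    moreover have "v \<in> graph_ball E v i" using i(1) by (rule center_in_graph_ball)
    then have "card (graph_ball E v i) > 0" using fin_b card_gt_0_iff by blast
    ultimately show False using card_Wb by simp
  qed
qed

lemma graph_ball_reaches_threshold:
  fixes t :: real
  assumes "graph V E" and W: "component_closed E W" "W \<subseteq> V" "real (card W) < t"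
    and maximal: "\<And>W'. W' \<subseteq> V \<Longrightarrow> component_closed E W' \<Longrightarrow> real (card W') < t \<Longrightarrow> card W' \<le> card W"
    and v: "v \<in> V" "v \<notin> W"
  shows "\<exists>p. real (p - 1) + real (card W) < t \<and> t \<le> real (card W + card (graph_ball E v p))"
proof -
  define h where "h j = card W + card (graph_ball E v j)" for j
  note grows =
    le_card_graph_ball_below_threshold[where t = t, OF assms(1) W(1,2) maximal v, folded h_def]
  have "t \<le> real (h (Suc (card V)))"
  proof (rule ccontr)
    assume "\<not> ?thesis"
    then have "Suc (card V) \<le> card (graph_ball E v (Suc (card V)))" using grows by simp
    moreover have "finite V" using assms(1) unfolding graph_def by simp
    then have "card (graph_ball E v (Suc (card V))) \<le> card V"
      using graph_ball_subset[OF assms(1) v(1)] by (rule card_mono)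
    ultimately show False by simp
  qed
  define p where "p = (LEAST j. t \<le> real (h j))"
  have "t \<le> real (h p)" unfolding p_def by (rule LeastI) fact
  moreover have "real (p - 1) + real (card W) < t"
  proof (cases "p = 0")
    case False
    then have "p - 1 < p" by simp
    then have "\<not> t \<le> real (h (p - 1))" unfolding p_def by (rule not_less_Least)
    with grows[of "p - 1"] show ?thesis unfolding h_def by simp
  qed (use W(3) in simp)
  ultimately show ?thesis unfolding h_def by blast
qed

lemma balanced_separation_of_linear_growth:
  fixes c :: real
  assumes "graph V E" and c: "c \<ge> 1"
    and growth: "\<forall>r::nat. r \<ge> 1 \<longrightarrow> real (growth V E r) \<le> c * real r"
    and sg: "subgraph V' E' V E"
  shows "\<exists>A B. separation V' E' A B \<and> balanced (1 - 1 / (4 * c)) V' A B \<and> real (card (A \<inter> B)) < 2 * c"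
proof (cases "V' = {}")
  case True
  then have "separation V' E' {} {} \<and> balanced (1 - 1 / (4 * c)) V' {} {}"
    unfolding separation_def balanced_def by simp
  with c show ?thesis by force
next
  case False
  have "graph V' E'" using sg unfolding subgraph_def by simp
  then have "finite V'" by (simp add: graph_def)
  with False have "card V' > 0" by (simp add: card_gt_0_iff)
  define t where "t = real (card V') / (4 * c)"
  define small where "small W \<longleftrightarrow> W \<subseteq> V' \<and> component_closed E' W \<and> real (card W) < t" for W
  have "small {}" unfolding small_def component_closed_def t_def using \<open>card V' > 0\<close> c by simp
  moreover have "card W < Suc (card V')" if "small W" for W
    using that card_mono[OF \<open>finite V'\<close>] unfolding small_def by (meson le_imp_less_Suc)
  ultimately obtain W where W: "small W" and maximal: "\<And>W'. small W' \<Longrightarrow> card W' \<le> card W"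
    using ex_has_greatest_nat[of small "{}" card "Suc (card V')"] by blast
  have "t < real (card V')" unfolding t_def using \<open>card V' > 0\<close> c by (simp add: field_simps)
  then have "\<not> V' \<subseteq> W" using W unfolding small_def by (metis subset_antisym not_less_iff_gr_or_eq)
  then obtain v where v: "v \<in> V'" "v \<notin> W" by blast
  obtain p where "real (p - 1) + real (card W) < t" "t \<le> real (card W + card (graph_ball E' v p))"
    using graph_ball_reaches_threshold[OF \<open>graph V' E'\<close> _ _ _ _ v] W maximal
    unfolding small_def by blast
  then show ?thesis
    using balanced_separation_at_thin_layer[OF \<open>graph V' E'\<close> _ _ v c
        card_graph_ball_le_linear[OF assms(1) sg v(1) c growth]] W
    unfolding small_def t_def by blast
qed

lemma sep_num_less:
  fixes x :: real
  assumes "x > 0"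
    and sep: "\<And>V' E'. subgraph V' E' V E \<Longrightarrow>
      \<exists>A B. separation V' E' A B \<and> balanced \<alpha> V' A B \<and> real (card (A \<inter> B)) < x"
  shows "real (sep_num \<alpha> V E) < x"
proof -
  define s where "s = nat (\<lceil>x\<rceil> - 1)"
  have le_s: "k \<le> s" if "real k < x" for k
  proof -
    have "int k < \<lceil>x\<rceil>" using that by (simp add: less_ceiling_iff)
    then show ?thesis unfolding s_def by linarith
  qed
  have "sep_num \<alpha> V E \<le> s"
    unfolding sep_num_def by (rule Least_le) (meson sep le_s)
  moreover have "real s < x"
  proof -
    have "0 \<le> \<lceil>x\<rceil> - 1" using assms(1) by simp
    then have "real s = real_of_int (\<lceil>x\<rceil> - 1)" unfolding s_def by (rule of_nat_nat)
    then show ?thesis using ceiling_correct[of x] by simp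
  qed
  ultimately show ?thesis by (meson of_nat_le_iff order_le_less_trans)
qed

theorem lemma6:
  fixes V :: "'a set" and E :: "'a \<Rightarrow> 'a \<Rightarrow> bool" and c :: real
  assumes "graph V E"
    and "c \<ge> 1"
    and "\<forall>r::nat. r \<ge> 1 \<longrightarrow> real (growth V E r) \<le> c * real r"
  shows "real (sep_num (1 - 1 / (4 * c)) V E) < 2 * c"
proof (rule sep_num_less)
  show "2 * c > 0" using assms(2) by simp
  show "\<exists>A B. separation V' E' A B \<and> balanced (1 - 1 / (4 * c)) V' A B \<and> real (card (A \<inter> B)) < 2 * c"
    if "subgraph V' E' V E" for V' E'
    using assms that by (rule balanced_separation_of_linear_growth)
qed

end
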